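(* Let $\alpha<\beta\le\alpha+2\pi$, $\gamma:=\pi/(\beta-\alpha)$, $a\in(0,1)$, $r>0$, and $z\in\angle(\alpha,\beta)$. If $a|z|\ge r$, then $$\omega\bigl(z,\overline D(r);\angle(\alpha,\beta)\bigr)\le\frac{2r^{\gamma}}{\pi(1-a^{\gamma})^2}\Bigl(-\operatorname{Im}\frac1{(ze^{-i\alpha})^{\gamma}}\Bigr),$$ and if $ar\ge|z|$, then $$\omega\bigl(z,\mathbb{C}\setminus D(r);\angle(\alpha,\beta)\bigr)\le\frac{2r^{-\gamma}}{\pi(1-a^{\gamma})^2}\operatorname{Im}\,(ze^{-i\alpha})^{\gamma}.$$
   Context: $\angle(\alpha,\beta)=\{z\ne0:\ \text{some value of }\arg z\in(\alpha,\beta)\}$ is an open angle; $(ze^{-i\alpha})^{\gamma}$ is the branch on the angle that maps it conformally onto the upper half-plane and is positive on $(0,\infty)$. For $z$ in the angle with image $w$ and Borel $B$, $\omega(z,B;\angle(\alpha,\beta)):=\frac1\pi\int_{B'}\frac{\operatorname{Im}w}{(t-\operatorname{Re}w)^2+(\operatorname{Im}w)^2}dt$, where $B'\subset\mathbb{R}$ is the image of $B\cap\partial\angle(\alpha,\beta)$ under the boundary extension of this map (the harmonic measure of $B\cap\partial\angle(\alpha,\beta)$ for the angle). $D(r)$, $\overline D(r)$: open/closed discs of radius $r$ about $0$. *)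

theory Defs
  imports "HOL-Analysis.Analysis"
begin

definition angle :: "real \<Rightarrow> real \<Rightarrow> complex set" where
  "angle \<alpha> \<beta> = {z. z \<noteq> 0 \<and> (\<exists>\<theta>. \<alpha> < \<theta> \<and> \<theta> < \<beta> \<and> z = of_real (cmod z) * cis \<theta>)}"

text \<open>The (unique, since beta - alpha <= 2 pi) argument value of z in (alpha, beta).\<close>
definition angle_arg :: "real \<Rightarrow> real \<Rightarrow> complex \<Rightarrow> real" where
  "angle_arg \<alpha> \<beta> z = (THE \<theta>. \<alpha> < \<theta> \<and> \<theta> < \<beta> \<and> z = of_real (cmod z) * cis \<theta>)"

definition angle_exp :: "real \<Rightarrow> real \<Rightarrow> real" where
  "angle_exp \<alpha> \<beta> = pi / (\<beta> - \<alpha>)"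

text \<open>The branch of (z e^{-i alpha})^gamma on the angle mapping it onto the upper
  half-plane, positive where z e^{-i alpha} is positive.\<close>
definition angle_map :: "real \<Rightarrow> real \<Rightarrow> complex \<Rightarrow> complex" where
  "angle_map \<alpha> \<beta> z =
     of_real (cmod z powr angle_exp \<alpha> \<beta>) * cis (angle_exp \<alpha> \<beta> * (angle_arg \<alpha> \<beta> z - \<alpha>))"

text \<open>Image on the real line of B \<inter> boundary of the angle under the boundary extension
  of the map: the ray of argument alpha goes to [0,inf) via s e^{i alpha} \<mapsto> s^gamma,
  the ray of argument beta goes to (-inf,0] via s e^{i beta} \<mapsto> -s^gamma
  (the vertex 0 goes to 0).\<close>
definition angle_bdry_image :: "real \<Rightarrow> real \<Rightarrow> complex set \<Rightarrow> real set" where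
  "angle_bdry_image \<alpha> \<beta> B =
     {t. 0 \<le> t \<and> of_real (t powr (1 / angle_exp \<alpha> \<beta>)) * cis \<alpha> \<in> B} \<union>
     {t. t \<le> 0 \<and> of_real ((- t) powr (1 / angle_exp \<alpha> \<beta>)) * cis \<beta> \<in> B}"

text \<open>Harmonic measure omega(z, B; angle(alpha,beta)) via the Poisson kernel of the
  upper half-plane.\<close>
definition harm_measure_angle :: "complex \<Rightarrow> complex set \<Rightarrow> real \<Rightarrow> real \<Rightarrow> real" where
  "harm_measure_angle z B \<alpha> \<beta> =
     (let w = angle_map \<alpha> \<beta> z in
      (1 / pi) * set_lebesgue_integral lborel (angle_bdry_image \<alpha> \<beta> B)
        (\<lambda>t. Im w / ((t - Re w)\<^sup>2 + (Im w)\<^sup>2)))"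

end

(*
  The map w = (z e^{-i alpha})^gamma sends the angle onto the upper half-plane, so the harmonic
  measure is the Poisson integral of the kernel Im w / |t - w|^2 over the image of the boundary
  set; by the reverse triangle inequality the kernel is at most Im w / (|t| - |w|)^2.
  Since |w| = |z|^gamma, the closed disc of radius r corresponds to |t| <= r^gamma <= a^gamma |w|,
  where the kernel is at most Im w / (|w| (1 - a^gamma))^2 = -Im (1/w) / (1 - a^gamma)^2 on an
  interval of length 2 r^gamma. The exterior of the disc corresponds to
  |t| >= r^gamma >= |w| / a^gamma, where the kernel is at most Im w / ((1 - a^gamma) t)^2,
  whose integral is 2 Im w / ((1 - a^gamma)^2 r^gamma).
*)
theory Submission
  imports Defs
begin

lemma angle_arg_bounds:
  assumes "\<beta> \<le> \<alpha> + 2 * pi" and "z \<in> angle \<alpha> \<beta>"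
  shows "\<alpha> < angle_arg \<alpha> \<beta> z" and "angle_arg \<alpha> \<beta> z < \<beta>"
proof -
  obtain \<theta> where \<theta>: "\<alpha> < \<theta>" "\<theta> < \<beta>" "z = of_real (cmod z) * cis \<theta>" and "z \<noteq> 0"
    using assms(2) unfolding angle_def by blast
  have "angle_arg \<alpha> \<beta> z = \<theta>"
    unfolding angle_arg_def
  proof (rule the_equality)
    fix \<phi> assume \<phi>: "\<alpha> < \<phi> \<and> \<phi> < \<beta> \<and> z = of_real (cmod z) * cis \<phi>"
    with \<theta> \<open>z \<noteq> 0\<close> have "cis \<phi> = cis \<theta>"
      by (metis mult_cancel_left norm_eq_zero of_real_eq_0_iff)
    then obtain n :: int where n: "\<phi> = \<theta> + 2 * pi * n"
      using sin_cos_eq_iff by (metis cis.sel)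
    have "\<bar>2 * pi * n\<bar> < 2 * pi"
      using n \<phi> \<theta> assms(1) by auto
    then have "n = 0"
      by (simp add: abs_mult)
    then show "\<phi> = \<theta>"
      using n by simp
  qed (use \<theta> in blast)
  with \<theta> show "\<alpha> < angle_arg \<alpha> \<beta> z" "angle_arg \<alpha> \<beta> z < \<beta>"
    by simp_all
qed

lemma angle_exp_pos: "\<alpha> < \<beta> \<Longrightarrow> 0 < angle_exp \<alpha> \<beta>"
  by (simp add: angle_exp_def)

lemma norm_angle_map: "cmod (angle_map \<alpha> \<beta> z) = cmod z powr angle_exp \<alpha> \<beta>"
  unfolding angle_map_def by (simp add: norm_mult)

lemma Im_angle_map_pos:
  assumes "\<alpha> < \<beta>" and "\<beta> \<le> \<alpha> + 2 * pi" and "z \<in> angle \<alpha> \<beta>"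
  shows "0 < Im (angle_map \<alpha> \<beta> z)"
proof -
  note angle_exp_pos[OF assms(1)] angle_arg_bounds[OF assms(2,3)]
  then have "0 < angle_exp \<alpha> \<beta> * (angle_arg \<alpha> \<beta> z - \<alpha>)"
    and "angle_exp \<alpha> \<beta> * (angle_arg \<alpha> \<beta> z - \<alpha>) < angle_exp \<alpha> \<beta> * (\<beta> - \<alpha>)"
    by simp_all
  moreover have "angle_exp \<alpha> \<beta> * (\<beta> - \<alpha>) = pi"
    using assms(1) by (simp add: angle_exp_def)
  moreover have "z \<noteq> 0"
    using assms(3) by (simp add: angle_def)
  ultimately show ?thesis
    unfolding angle_map_def by (simp add: sin_gt_zero)
qed

lemma angle_bdry_image_radial:
  "angle_bdry_image \<alpha> \<beta> {z. P (cmod z)} = {t. P (\<bar>t\<bar> powr (1 / angle_exp \<alpha> \<beta>))}"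
  unfolding angle_bdry_image_def by (auto simp: norm_mult abs_if)

lemma angle_bdry_image_cball:
  assumes "\<alpha> < \<beta>"
  shows "angle_bdry_image \<alpha> \<beta> (cball 0 r) \<subseteq> {t. \<bar>t\<bar> \<le> r powr angle_exp \<alpha> \<beta>}"
proof -
  have "\<bar>t\<bar> \<le> r powr angle_exp \<alpha> \<beta>" if "\<bar>t\<bar> powr (1 / angle_exp \<alpha> \<beta>) \<le> r" for t
    using powr_mono2[OF _ _ that, of "angle_exp \<alpha> \<beta>"] angle_exp_pos[OF assms] by (simp add: powr_powr)
  moreover have "cball 0 r = {z. cmod z \<le> r}"
    by auto
  ultimately show ?thesis
    using angle_bdry_image_radial[of \<alpha> \<beta> "\<lambda>\<rho>. \<rho> \<le> r"] by auto
qed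

lemma angle_bdry_image_outside_ball:
  assumes "\<alpha> < \<beta>" and "0 \<le> r"
  shows "angle_bdry_image \<alpha> \<beta> (- ball 0 r) \<subseteq> {t. r powr angle_exp \<alpha> \<beta> \<le> \<bar>t\<bar>}"
proof -
  have "r powr angle_exp \<alpha> \<beta> \<le> \<bar>t\<bar>" if "r \<le> \<bar>t\<bar> powr (1 / angle_exp \<alpha> \<beta>)" for t
    using powr_mono2[OF _ _ that, of "angle_exp \<alpha> \<beta>"] angle_exp_pos[OF assms(1)] assms(2)
    by (simp add: powr_powr)
  moreover have "- ball 0 r = {z. r \<le> cmod z}"
    by (auto simp: not_less)
  ultimately show ?thesis
    using angle_bdry_image_radial[of \<alpha> \<beta> "\<lambda>\<rho>. r \<le> \<rho>"] by auto
qed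

definition poisson_kernel :: "complex \<Rightarrow> real \<Rightarrow> real" where
  "poisson_kernel w t = Im w / ((t - Re w)\<^sup>2 + (Im w)\<^sup>2)"

lemma harm_measure_angle_poisson:
  "harm_measure_angle z B \<alpha> \<beta> =
     set_lebesgue_integral lborel (angle_bdry_image \<alpha> \<beta> B) (poisson_kernel (angle_map \<alpha> \<beta> z)) / pi"
  unfolding harm_measure_angle_def poisson_kernel_def Let_def by simp

lemma poisson_kernel_nonneg: "0 < Im w \<Longrightarrow> 0 \<le> poisson_kernel w t"
  unfolding poisson_kernel_def by simp

lemma poisson_kernel_le:
  assumes "0 < Im w" and "\<bar>t\<bar> \<noteq> cmod w"
  shows "poisson_kernel w t \<le> Im w / (\<bar>t\<bar> - cmod w)\<^sup>2"
proof -
  have "\<bar>\<bar>t\<bar> - cmod w\<bar> \<le> cmod (of_real t - w)"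
    using norm_triangle_ineq3[of "of_real t" w] by simp
  then have "(\<bar>t\<bar> - cmod w)\<^sup>2 \<le> (cmod (of_real t - w))\<^sup>2"
    by (metis abs_ge_zero power2_abs power_mono)
  also have "\<dots> = (t - Re w)\<^sup>2 + (Im w)\<^sup>2"
    by (simp add: cmod_power2)
  finally show ?thesis
    unfolding poisson_kernel_def using assms
    by (intro divide_left_mono mult_pos_pos) (simp_all add: add_nonneg_pos)
qed

lemma nn_integral_inverse_square_atLeast:
  assumes "0 < R"
  shows "(\<integral>\<^sup>+ t. ennreal (indicator {R..} t / t\<^sup>2) \<partial>lborel) = ennreal (1 / R)"
proof -
  have "((\<lambda>t::real. 1 / t ^ 2) has_integral 1 / (real (2 - 1) * R ^ (2 - 1))) {R..}"
    by (rule has_integral_inverse_power_to_inf) (use assms in auto)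
  then have "((\<lambda>t::real. 1 / t\<^sup>2) has_integral 1 / R) {R..}"
    by simp
  from nn_integral_has_integral_lebesgue[OF _ this] show ?thesis
    by simp
qed

lemma nn_integral_inverse_square_outside:
  assumes "0 < R"
  shows "(\<integral>\<^sup>+ t. ennreal (indicator {t. R \<le> \<bar>t\<bar>} t / t\<^sup>2) \<partial>lborel) = ennreal (2 / R)"
proof -
  have "(\<integral>\<^sup>+ t. ennreal (indicator {t. R \<le> \<bar>t\<bar>} t / t\<^sup>2) \<partial>lborel)
      = (\<integral>\<^sup>+ t. ennreal (indicator {R..} t / t\<^sup>2) + ennreal (indicator {R..} (- t) / (- t)\<^sup>2) \<partial>lborel)"
    using assms by (intro nn_integral_cong) (auto simp: indicator_def)
  also have "\<dots> = (\<integral>\<^sup>+ t. ennreal (indicator {R..} t / t\<^sup>2) \<partial>lborel)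
                 + (\<integral>\<^sup>+ t. ennreal (indicator {R..} (- t) / (- t)\<^sup>2) \<partial>lborel)"
    by (rule nn_integral_add) auto
  also have "(\<integral>\<^sup>+ t. ennreal (indicator {R..} (- t) / (- t)\<^sup>2) \<partial>lborel)
           = (\<integral>\<^sup>+ t. ennreal (indicator {R..} t / t\<^sup>2) \<partial>lborel)"
    by (subst (2) lborel_distr_uminus[symmetric]) (simp add: nn_integral_distr)
  finally show ?thesis
    using assms by (simp add: nn_integral_inverse_square_atLeast flip: ennreal_plus)
qed

text \<open>Going through the nonnegative integral avoids any integrability hypothesis on \<open>f\<close>:
  if \<open>f\<close> is not integrable, its Lebesgue integral is the junk value 0.\<close>
lemma set_integral_le_by_majorant:
  fixes f g :: "'a \<Rightarrow> real"
  assumes "S \<subseteq> T" and "\<And>t. t \<in> S \<Longrightarrow> 0 \<le> f t" and "\<And>t. t \<in> S \<Longrightarrow> f t \<le> g t"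
    and "(\<integral>\<^sup>+ t. ennreal (indicator T t * g t) \<partial>M) = ennreal C" and "0 \<le> C"
  shows "set_lebesgue_integral M S f \<le> C"
  unfolding set_lebesgue_integral_def
proof (rule integral_real_bounded)
  have "ennreal (indicator S t * f t) \<le> ennreal (indicator T t * g t)" for t
    using assms(1-3) by (cases "t \<in> S") (auto simp: indicator_def intro!: ennreal_leI)
  then show "(\<integral>\<^sup>+ t. ennreal (indicator S t *\<^sub>R f t) \<partial>M) \<le> ennreal C"
    unfolding assms(4)[symmetric] by (simp add: nn_integral_mono)
qed (rule assms(5))

lemma poisson_integral_inside_le:
  assumes "0 < Im w" and "S \<subseteq> {t. \<bar>t\<bar> \<le> R}" and "0 \<le> R" and "R \<le> A * cmod w" and "A < 1"
  shows "set_lebesgue_integral lborel S (poisson_kernel w) \<le> 2 * R / (1 - A)\<^sup>2 * (- Im (1 / w))"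
proof -
  define c where "c = Im w / (cmod w * (1 - A))\<^sup>2"
  have "0 \<le> c"
    unfolding c_def using assms(1) by simp
  have "0 < cmod w"
    using assms(1) by (metis abs_Im_le_cmod abs_of_pos order_less_le_trans)
  have "poisson_kernel w t \<le> c" if "t \<in> S" for t
  proof -
    have gap: "cmod w * (1 - A) \<le> cmod w - \<bar>t\<bar>"
      using that assms(2,4) by (auto simp: algebra_simps)
    have pos: "0 < cmod w * (1 - A)"
      using \<open>0 < cmod w\<close> assms(5) by simp
    then have "\<bar>t\<bar> \<noteq> cmod w"
      using gap by linarith
    then have "poisson_kernel w t \<le> Im w / (\<bar>t\<bar> - cmod w)\<^sup>2"
      by (rule poisson_kernel_le[OF assms(1)])
    also have "\<dots> \<le> c"
    proof -
      have "(cmod w * (1 - A))\<^sup>2 \<le> (\<bar>t\<bar> - cmod w)\<^sup>2"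
        using gap pos by (subst power2_commute) (intro power_mono; simp)
      moreover have "0 < (cmod w * (1 - A))\<^sup>2"
        using pos by (rule zero_less_power)
      ultimately show ?thesis
        unfolding c_def using assms(1) by (intro divide_left_mono mult_pos_pos) auto
    qed
    finally show ?thesis .
  qed
  moreover have "(\<integral>\<^sup>+ t. ennreal (indicator {t. \<bar>t\<bar> \<le> R} t * c) \<partial>lborel) = ennreal (2 * R * c)"
  proof -
    have "{t. \<bar>t\<bar> \<le> R} = {-R..R}"
      by auto
    then show ?thesis
      using assms(3) \<open>0 \<le> c\<close>
      by (simp add: mult.commute[of _ c] ennreal_mult' ennreal_indicator nn_integral_cmult_indicator)
  qed
  ultimately have "set_lebesgue_integral lborel S (poisson_kernel w) \<le> 2 * R * c"
    using assms(1-3) \<open>0 \<le> c\<close> poisson_kernel_nonneg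
    by (intro set_integral_le_by_majorant[where T = "{t. \<bar>t\<bar> \<le> R}" and g = "\<lambda>_. c"]) auto
  also have "2 * R * c = 2 * R / (1 - A)\<^sup>2 * (Im w / (cmod w)\<^sup>2)"
    unfolding c_def by (simp add: power_mult_distrib)
  also have "Im w / (cmod w)\<^sup>2 = - Im (1 / w)"
    by (simp add: cmod_power2 Im_divide)
  finally show ?thesis .
qed

lemma poisson_integral_outside_le:
  assumes "0 < Im w" and "S \<subseteq> {t. R \<le> \<bar>t\<bar>}" and "0 < R" and "cmod w \<le> A * R" and "A < 1"
  shows "set_lebesgue_integral lborel S (poisson_kernel w) \<le> 2 / (R * (1 - A)\<^sup>2) * Im w"
proof -
  define K where "K = Im w / (1 - A)\<^sup>2"
  have "0 \<le> K"
    unfolding K_def using assms(1) by simp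
  have "0 < cmod w"
    using assms(1) by (metis abs_Im_le_cmod abs_of_pos order_less_le_trans)
  then have "0 < A * R"
    using assms(4) by linarith
  then have "0 < A"
    using assms(3) by (simp add: zero_less_mult_iff)
  have "poisson_kernel w t \<le> K / t\<^sup>2" if "t \<in> S" for t
  proof -
    have "A * R \<le> A * \<bar>t\<bar>"
      using that assms(2) \<open>0 < A\<close> by auto
    then have gap: "\<bar>t\<bar> * (1 - A) \<le> \<bar>t\<bar> - cmod w"
      using assms(4) by (simp add: algebra_simps)
    have pos: "0 < \<bar>t\<bar> * (1 - A)"
      using that assms(2,3,5) by auto
    then have "\<bar>t\<bar> \<noteq> cmod w"
      using gap by linarith
    then have "poisson_kernel w t \<le> Im w / (\<bar>t\<bar> - cmod w)\<^sup>2"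
      by (rule poisson_kernel_le[OF assms(1)])
    also have "\<dots> \<le> Im w / (\<bar>t\<bar> * (1 - A))\<^sup>2"
    proof -
      have "(\<bar>t\<bar> * (1 - A))\<^sup>2 \<le> (\<bar>t\<bar> - cmod w)\<^sup>2"
        using gap pos by (intro power_mono) auto
      moreover have "0 < (\<bar>t\<bar> * (1 - A))\<^sup>2"
        using pos by (rule zero_less_power)
      ultimately show ?thesis
        using assms(1) by (intro divide_left_mono mult_pos_pos) auto
    qed
    also have "\<dots> = K / t\<^sup>2"
      unfolding K_def by (simp add: power_mult_distrib)
    finally show ?thesis .
  qed
  moreover have "(\<integral>\<^sup>+ t. ennreal (indicator {t. R \<le> \<bar>t\<bar>} t * (K / t\<^sup>2)) \<partial>lborel) = ennreal (K * (2 / R))"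
  proof -
    have "(\<integral>\<^sup>+ t. ennreal (indicator {t. R \<le> \<bar>t\<bar>} t * (K / t\<^sup>2)) \<partial>lborel)
        = (\<integral>\<^sup>+ t. ennreal K * ennreal (indicator {t. R \<le> \<bar>t\<bar>} t / t\<^sup>2) \<partial>lborel)"
      using \<open>0 \<le> K\<close> by (intro nn_integral_cong) (simp flip: ennreal_mult')
    also have "\<dots> = ennreal K * ennreal (2 / R)"
      using assms(3) by (simp add: nn_integral_cmult nn_integral_inverse_square_outside)
    also have "\<dots> = ennreal (K * (2 / R))"
      using \<open>0 \<le> K\<close> by (simp flip: ennreal_mult')
    finally show ?thesis .
  qed
  ultimately have "set_lebesgue_integral lborel S (poisson_kernel w) \<le> K * (2 / R)"
    using assms(1-3) \<open>0 \<le> K\<close> poisson_kernel_nonneg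
    by (intro set_integral_le_by_majorant[where T = "{t. R \<le> \<bar>t\<bar>}" and g = "\<lambda>t. K / t\<^sup>2"]) auto
  also have "K * (2 / R) = 2 / (R * (1 - A)\<^sup>2) * Im w"
    unfolding K_def by (simp add: mult_ac)
  finally show ?thesis .
qed

lemma harm_measure_angle_cball_le:
  assumes "\<alpha> < \<beta>" and "\<beta> \<le> \<alpha> + 2 * pi" and "z \<in> angle \<alpha> \<beta>"
    and "0 < a" and "a < 1" and "0 \<le> r" and "r \<le> a * cmod z"
  shows "harm_measure_angle z (cball 0 r) \<alpha> \<beta>
    \<le> 2 * r powr angle_exp \<alpha> \<beta> / (pi * (1 - a powr angle_exp \<alpha> \<beta>)\<^sup>2) * (- Im (1 / angle_map \<alpha> \<beta> z))"
proof -
  let ?\<gamma> = "angle_exp \<alpha> \<beta>" and ?w = "angle_map \<alpha> \<beta> z"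
  have "0 < ?\<gamma>"
    using assms(1) by (rule angle_exp_pos)
  then have "a powr ?\<gamma> < 1"
    using assms(4,5) powr_less_mono2[of ?\<gamma> a 1] by simp
  have "r powr ?\<gamma> \<le> a powr ?\<gamma> * cmod ?w"
    using assms(4,6,7) \<open>0 < ?\<gamma>\<close> by (simp add: norm_angle_map powr_mono2 flip: powr_mult)
  then have "set_lebesgue_integral lborel (angle_bdry_image \<alpha> \<beta> (cball 0 r)) (poisson_kernel ?w)
      \<le> 2 * r powr ?\<gamma> / (1 - a powr ?\<gamma>)\<^sup>2 * (- Im (1 / ?w))"
    using Im_angle_map_pos[OF assms(1-3)] angle_bdry_image_cball[OF assms(1)] \<open>a powr ?\<gamma> < 1\<close>
    by (intro poisson_integral_inside_le) auto
  then have "set_lebesgue_integral lborel (angle_bdry_image \<alpha> \<beta> (cball 0 r)) (poisson_kernel ?w) / pi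
      \<le> 2 * r powr ?\<gamma> / (1 - a powr ?\<gamma>)\<^sup>2 * (- Im (1 / ?w)) / pi"
    by (rule divide_right_mono) simp
  then show ?thesis
    unfolding harm_measure_angle_poisson by (simp add: mult.commute)
qed

lemma harm_measure_angle_outside_ball_le:
  assumes "\<alpha> < \<beta>" and "\<beta> \<le> \<alpha> + 2 * pi" and "z \<in> angle \<alpha> \<beta>"
    and "0 < a" and "a < 1" and "0 < r" and "cmod z \<le> a * r"
  shows "harm_measure_angle z (- ball 0 r) \<alpha> \<beta>
    \<le> 2 * r powr (- angle_exp \<alpha> \<beta>) / (pi * (1 - a powr angle_exp \<alpha> \<beta>)\<^sup>2) * Im (angle_map \<alpha> \<beta> z)"
proof -
  let ?\<gamma> = "angle_exp \<alpha> \<beta>" and ?w = "angle_map \<alpha> \<beta> z"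
  have "0 < ?\<gamma>"
    using assms(1) by (rule angle_exp_pos)
  then have "a powr ?\<gamma> < 1"
    using assms(4,5) powr_less_mono2[of ?\<gamma> a 1] by simp
  have "cmod ?w \<le> a powr ?\<gamma> * r powr ?\<gamma>"
    using assms(4,6,7) \<open>0 < ?\<gamma>\<close> by (simp add: norm_angle_map powr_mono2 flip: powr_mult)
  then have "set_lebesgue_integral lborel (angle_bdry_image \<alpha> \<beta> (- ball 0 r)) (poisson_kernel ?w)
      \<le> 2 / (r powr ?\<gamma> * (1 - a powr ?\<gamma>)\<^sup>2) * Im ?w"
    using Im_angle_map_pos[OF assms(1-3)] angle_bdry_image_outside_ball[OF assms(1)] assms(6)
      \<open>a powr ?\<gamma> < 1\<close>
    by (intro poisson_integral_outside_le) auto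
  then have "set_lebesgue_integral lborel (angle_bdry_image \<alpha> \<beta> (- ball 0 r)) (poisson_kernel ?w) / pi
      \<le> 2 / (r powr ?\<gamma> * (1 - a powr ?\<gamma>)\<^sup>2) * Im ?w / pi"
    by (rule divide_right_mono) simp
  then show ?thesis
    unfolding harm_measure_angle_poisson by (simp add: powr_minus divide_inverse)
qed

theorem proposition13:
  fixes \<alpha> \<beta> a r :: real and z :: complex
  defines "\<gamma> \<equiv> pi / (\<beta> - \<alpha>)"
  assumes "\<alpha> < \<beta>" and "\<beta> \<le> \<alpha> + 2 * pi"
    and "0 < a" and "a < 1" and "0 < r"
    and "z \<in> angle \<alpha> \<beta>"
  shows "(a * cmod z \<ge> r \<longrightarrow>
           harm_measure_angle z (cball 0 r) \<alpha> \<beta>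
             \<le> 2 * r powr \<gamma> / (pi * (1 - a powr \<gamma>)\<^sup>2) * (- Im (1 / angle_map \<alpha> \<beta> z))) \<and>
         (a * r \<ge> cmod z \<longrightarrow>
           harm_measure_angle z (- ball 0 r) \<alpha> \<beta>
             \<le> 2 * r powr (- \<gamma>) / (pi * (1 - a powr \<gamma>)\<^sup>2) * Im (angle_map \<alpha> \<beta> z))"
  using assms harm_measure_angle_cball_le[of \<alpha> \<beta> z a r] harm_measure_angle_outside_ball_le[of \<alpha> \<beta> z a r]
  unfolding \<gamma>_def angle_exp_def by simp

end
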